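(* Let $\gamma>0$, let $V\in C_{p,\gamma}^{0}(\mathbb{R})$ be real-valued, and $\lambda\in\mathbb{R}$. Suppose $\psi(x)=e^{\mathrm{i}kx}p(x)$, with $k\in\mathbb{C}$ and $p\in C^2_{p,\gamma}(\mathbb{R})$, is a bounded Bloch solution of $-\psi''+V\psi=\lambda\psi$ that has a zero. Then the quasimomentum is $k=\frac{n\pi}{\gamma}$ for some $n\in\mathbb{Z}$, and $\psi$ equals the product of a complex constant and a real-valued function $f$ that is $\gamma$-periodic or $\gamma$-anti-periodic ($f(x+\gamma)=f(x)$ for all $x$, or $f(x+\gamma)=-f(x)$ for all $x$).
   Context: $C_{p}^{0}(I)$: integrable piecewise-continuous functions on $I$ (finitely many discontinuities on each finite subinterval, one-sided improper integrals of $|f|$ converging at each discontinuity); $C_{p}^{l}(I)$: differentiable functions with derivative in $C_{p}^{l-1}(I)$; $C_{p,\gamma}^{l}(\mathbb{R})$: $\gamma$-periodic functions in $C_{p}^{l}(\mathbb{R})$. A Bloch solution is a solution of the form $e^{\mathrm{i}kx}p(x)$ with $p$ $\gamma$-periodic; $k$ is its quasimomentum. *)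

theory Defs
  imports "HOL-Analysis.Analysis"
begin

definition pc0 :: "(real \<Rightarrow> 'a::real_normed_vector) \<Rightarrow> bool" where
  "pc0 f \<longleftrightarrow>
     (\<forall>a b. finite {x \<in> {a..b}. \<not> isCont f x}) \<and>
     (\<forall>c. \<not> isCont f c \<longrightarrow>
        (\<exists>\<delta>>0. (\<forall>t\<in>{c<..c+\<delta>}. isCont f t) \<and>
           (\<exists>L. ((\<lambda>e. integral {c+e..c+\<delta>} (\<lambda>t. norm (f t))) \<longlongrightarrow> L) (at_right 0))) \<and>
        (\<exists>\<delta>>0. (\<forall>t\<in>{c-\<delta>..<c}. isCont f t) \<and>
           (\<exists>L. ((\<lambda>e. integral {c-\<delta>..c-e} (\<lambda>t. norm (f t))) \<longlongrightarrow> L) (at_right 0))))"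

fun pcl :: "nat \<Rightarrow> (real \<Rightarrow> 'a::real_normed_vector) \<Rightarrow> bool" where
  "pcl 0 f = pc0 f"
| "pcl (Suc l) f = (\<exists>f'. (\<forall>x. (f has_vector_derivative f' x) (at x)) \<and> pcl l f')"

definition pcl_per :: "real \<Rightarrow> nat \<Rightarrow> (real \<Rightarrow> 'a::real_normed_vector) \<Rightarrow> bool" where
  "pcl_per \<gamma> l f \<longleftrightarrow> pcl l f \<and> (\<forall>x. f (x + \<gamma>) = f x)"

definition solves_schroedinger :: "(real \<Rightarrow> real) \<Rightarrow> real \<Rightarrow> (real \<Rightarrow> complex) \<Rightarrow> bool" where
  "solves_schroedinger V lam \<psi> \<longleftrightarrow>
     (\<exists>\<psi>' \<psi>''. \<forall>x. (\<psi> has_vector_derivative \<psi>' x) (at x) \<and>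
                  (\<psi>' has_vector_derivative \<psi>'' x) (at x) \<and>
                  - \<psi>'' x + of_real (V x) * \<psi> x = of_real lam * \<psi> x)"

end

(*
  Re psi and Im psi solve the same real equation, and their Wronskian Im (cnj psi * psi')
  is constant, hence zero because psi has a zero. Therefore Im (cnj (psi a) * psi), for a
  point a with psi a ~= 0, is a real solution with vanishing Cauchy data at a, and it
  vanishes identically by uniqueness; so psi is a constant times a real function f.
  Uniqueness for a merely piecewise continuous V comes from a Gronwall estimate for the
  energy w^2 + w'^2, which only needs the local integrability of V built into C_p^0.
  The Floquet multiplier mu = exp (i k gamma) then is real, and boundedness of psi forces
  |mu| = 1, i.e. mu = 1 or mu = -1: this gives k in (pi/gamma) Z and the periodicity or
  anti-periodicity of f.
*)

theory Submission
  imports Defs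
begin

lemma gronwall_differential_inequality:
  fixes E E' h :: "real \<Rightarrow> real" and s t :: real
  assumes "s \<le> t" and h: "continuous_on {s..t} h"
    and E: "\<And>x. x \<in> {s..t} \<Longrightarrow> (E has_real_derivative E' x) (at x within {s..t})"
    and E'_le: "\<And>x. x \<in> {s..t} \<Longrightarrow> E' x \<le> h x * E x"
  shows "E t \<le> E s * exp (integral {s..t} h)"
proof -
  define H where "H x = integral {s..x} h" for x
  define F where "F x = E x * exp (- H x)" for x
  define F' where "F' x = (E' x - h x * E x) * exp (- H x)" for x
  have "(F has_derivative (*) (F' x)) (at x within {s..t})" if x: "x \<in> {s..t}" for x
  proof -
    have "(H has_real_derivative h x) (at x within {s..t})"
      unfolding H_def by (rule integral_has_real_derivative[OF h x])
    then have "(F has_real_derivative F' x) (at x within {s..t})"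
      unfolding F_def F'_def by (auto intro!: derivative_eq_intros E x simp: algebra_simps)
    then show ?thesis by (simp add: has_field_derivative_def)
  qed
  then obtain \<xi> where "\<xi> \<in> {s..t}" and "F t - F s = F' \<xi> * (t - s)"
    using mvt_very_simple[OF \<open>s \<le> t\<close>, of F "\<lambda>x. (*) (F' x)"] by auto
  moreover have "F' \<xi> \<le> 0"
    unfolding F'_def using E'_le[OF \<open>\<xi> \<in> {s..t}\<close>] by (simp add: mult_nonpos_nonneg)
  ultimately have "F t \<le> F s" using \<open>s \<le> t\<close> by (smt (verit) mult_nonpos_nonneg)
  then show ?thesis by (simp add: F_def H_def exp_minus field_simps)
qed

lemma isCont_reflect_iff:
  fixes f :: "real \<Rightarrow> 'a::topological_space"
  shows "isCont (\<lambda>x. f (- x)) x \<longleftrightarrow> isCont f (- x)"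
proof
  show "isCont f (- x)" if "isCont (\<lambda>x. f (- x)) x"
    using isCont_o2[OF continuous_ident[THEN isCont_minus, of "- x"], of "\<lambda>x. f (- x)"] that by simp
  show "isCont (\<lambda>x. f (- x)) x" if "isCont f (- x)"
    using isCont_o2[OF continuous_ident[THEN isCont_minus, of x] that] by simp
qed

lemma pc0_reflect:
  fixes f :: "real \<Rightarrow> 'a::real_normed_vector"
  assumes "pc0 f"
  shows "pc0 (\<lambda>x. f (- x))"
  unfolding pc0_def
proof (intro conjI allI impI)
  fix a b :: real
  have "{x \<in> {a..b}. \<not> isCont (\<lambda>x. f (- x)) x} = uminus ` {y \<in> {-b..-a}. \<not> isCont f y}"
    by (auto simp: isCont_reflect_iff intro!: image_eqI[where x="- x" for x])
  then show "finite {x \<in> {a..b}. \<not> isCont (\<lambda>x. f (- x)) x}"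
    using assms unfolding pc0_def by simp
next
  fix c assume "\<not> isCont (\<lambda>x. f (- x)) c"
  then have "\<not> isCont f (- c)" by (simp add: isCont_reflect_iff)
  then obtain \<delta>l Ll \<delta>r Lr where "\<delta>l > 0" and cont_l: "\<forall>t\<in>{-c-\<delta>l..<-c}. isCont f t"
      and Ll: "((\<lambda>e. integral {-c-\<delta>l..-c-e} (\<lambda>t. norm (f t))) \<longlongrightarrow> Ll) (at_right 0)"
      and "\<delta>r > 0" and cont_r: "\<forall>t\<in>{-c<..-c+\<delta>r}. isCont f t"
      and Lr: "((\<lambda>e. integral {-c+e..-c+\<delta>r} (\<lambda>t. norm (f t))) \<longlongrightarrow> Lr) (at_right 0)"
    using assms unfolding pc0_def by blast
  have reflect_l: "integral {c+e..c+\<delta>l} (\<lambda>t. norm (f (- t))) = integral {-c-\<delta>l..-c-e} (\<lambda>t. norm (f t))"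
    and reflect_r: "integral {c-\<delta>r..c-e} (\<lambda>t. norm (f (- t))) = integral {-c+e..-c+\<delta>r} (\<lambda>t. norm (f t))"
    for e
    \<comment> \<open>qualified: the unqualified name is the Lebesgue-integral version\<close>
    using Henstock_Kurzweil_Integration.integral_reflect_real[of "-c-e" "-c-\<delta>l" "\<lambda>t. norm (f t)"]
      Henstock_Kurzweil_Integration.integral_reflect_real[of "-c+\<delta>r" "-c+e" "\<lambda>t. norm (f t)"]
    by (simp_all add: add.commute)
  show "\<exists>\<delta>>0. (\<forall>t\<in>{c<..c+\<delta>}. isCont (\<lambda>x. f (- x)) t) \<and>
          (\<exists>L. ((\<lambda>e. integral {c+e..c+\<delta>} (\<lambda>t. norm (f (- t)))) \<longlongrightarrow> L) (at_right 0))"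
    using \<open>\<delta>l > 0\<close> cont_l Ll
    by (intro exI[of _ \<delta>l] conjI exI[of _ Ll]) (auto simp: isCont_reflect_iff reflect_l)
  show "\<exists>\<delta>>0. (\<forall>t\<in>{c-\<delta>..<c}. isCont (\<lambda>x. f (- x)) t) \<and>
          (\<exists>L. ((\<lambda>e. integral {c-\<delta>..c-e} (\<lambda>t. norm (f (- t)))) \<longlongrightarrow> L) (at_right 0))"
    using \<open>\<delta>r > 0\<close> cont_r Lr
    by (intro exI[of _ \<delta>r] conjI exI[of _ Lr]) (auto simp: isCont_reflect_iff reflect_r)
qed

lemma pc0_improper_integral_right:
  fixes V :: "real \<Rightarrow> real"
  assumes "pc0 V"
  obtains \<delta> L where "\<delta> > 0" "\<And>x. x \<in> {b<..b+\<delta>} \<Longrightarrow> isCont V x"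
    "((\<lambda>s. integral {s..b+\<delta>} (\<lambda>x. \<bar>V x\<bar>)) \<longlongrightarrow> L) (at_right b)"
proof (cases "isCont V b")
  case False
  then obtain \<delta> L where "\<delta> > 0" "\<forall>x\<in>{b<..b+\<delta>}. isCont V x"
    and L: "((\<lambda>e. integral {b+e..b+\<delta>} (\<lambda>x. norm (V x))) \<longlongrightarrow> L) (at_right 0)"
    using assms unfolding pc0_def by blast
  moreover have "((\<lambda>s. integral {s..b+\<delta>} (\<lambda>x. \<bar>V x\<bar>)) \<longlongrightarrow> L) (at_right b)"
    using L unfolding filterlim_at_right_to_0[where a=b] by (simp add: add.commute[of _ b])
  ultimately show ?thesis by (intro that) auto
next
  case True
  have "finite {x \<in> {b..b+1}. \<not> isCont V x}"
    using conjunct1[OF assms[unfolded pc0_def]] by blast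
  then obtain d where "d > 0"
    and d: "\<And>x. x \<in> {x \<in> {b..b+1}. \<not> isCont V x} \<Longrightarrow> x \<noteq> b \<Longrightarrow> d \<le> dist b x"
    using finite_set_avoid[of _ b] by blast
  define \<delta> where "\<delta> = min 1 (d/2)"
  have "\<delta> > 0" using \<open>d > 0\<close> by (simp add: \<delta>_def)
  have cont: "isCont V x" if "x \<in> {b..b+\<delta>}" for x
  proof (rule ccontr)
    assume "\<not> isCont V x"
    moreover from this True have "x \<noteq> b" by auto
    ultimately have "d \<le> dist b x" using that by (intro d) (auto simp: \<delta>_def)
    with that \<open>d > 0\<close> show False by (auto simp: \<delta>_def dist_real_def)
  qed
  then have "continuous_on {b..b+\<delta>} (\<lambda>x. \<bar>V x\<bar>)"
    by (intro continuous_at_imp_continuous_on continuous_intros) auto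
  then have "continuous_on {b..b+\<delta>} (\<lambda>s. integral {s..b+\<delta>} (\<lambda>x. \<bar>V x\<bar>))"
    by (intro indefinite_integral_continuous_1' integrable_continuous_real)
  then have "((\<lambda>s. integral {s..b+\<delta>} (\<lambda>x. \<bar>V x\<bar>)) \<longlongrightarrow> integral {b..b+\<delta>} (\<lambda>x. \<bar>V x\<bar>))
      (at_right b)"
    by (rule continuous_on_Icc_at_rightD) (use \<open>\<delta> > 0\<close> in simp)
  with \<open>\<delta> > 0\<close> cont show ?thesis by (intro that) auto
qed

lemma schroedinger_zero_propagates_right:
  fixes w w' w'' V :: "real \<Rightarrow> real" and lam b :: real
  assumes "pc0 V"
    and w: "\<And>x. (w has_real_derivative w' x) (at x)"
    and w': "\<And>x. (w' has_real_derivative w'' x) (at x)"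
    and eq: "\<And>x. w'' x = (V x - lam) * w x"
    and "w b = 0" "w' b = 0"
  shows "\<forall>\<^sub>F t in at_right b. w t = 0 \<and> w' t = 0"
proof -
  obtain \<delta> L where "\<delta> > 0" and cont: "\<And>x. x \<in> {b<..b+\<delta>} \<Longrightarrow> isCont V x"
    and L: "((\<lambda>s. integral {s..b+\<delta>} (\<lambda>x. \<bar>V x\<bar>)) \<longlongrightarrow> L) (at_right b)"
    using pc0_improper_integral_right[OF \<open>pc0 V\<close>] by blast
  (* E' <= h E, and the integral of h over [s, t] stays bounded as s tends to b because V is
     improperly integrable there; so E t <= E s * exp K with E s tending to E b = 0. *)
  define E where "E x = (w x)\<^sup>2 + (w' x)\<^sup>2" for x
  define h where "h x = 1 + \<bar>lam\<bar> + \<bar>V x\<bar>" for x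
  have h_cont: "continuous_on {s..t} h" if "b < s" "t \<le> b + \<delta>" for s t
  proof -
    have "continuous_on {s..t} V"
      using that by (intro continuous_at_imp_continuous_on) (auto intro!: cont)
    then show ?thesis unfolding h_def by (intro continuous_intros)
  qed
  have E_growth: "E t \<le> E s * exp (integral {s..t} h)" if "b < s" "s \<le> t" "t \<le> b + \<delta>" for s t
  proof (rule gronwall_differential_inequality)
    show "continuous_on {s..t} h" using h_cont that by simp
    show "(E has_real_derivative 2 * w x * w' x * (1 + V x - lam)) (at x within {s..t})" for x
      unfolding E_def
      by (auto intro!: derivative_eq_intros has_field_derivative_at_within[OF w]
          has_field_derivative_at_within[OF w'] simp: eq algebra_simps)
    show "2 * w x * w' x * (1 + V x - lam) \<le> h x * E x" for x
    proof -
      have "2 * \<bar>w x\<bar> * \<bar>w' x\<bar> \<le> E x"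
        using sum_squares_bound[of "\<bar>w x\<bar>" "\<bar>w' x\<bar>"] by (simp add: E_def)
      moreover have "\<bar>1 + V x - lam\<bar> \<le> h x" unfolding h_def by linarith
      ultimately have "\<bar>2 * w x * w' x * (1 + V x - lam)\<bar> \<le> E x * h x"
        by (simp add: abs_mult mult_mono')
      then show ?thesis by (simp add: mult.commute)
    qed
  qed (use that in simp)
  have h_integral: "integral {s..t} h \<le> \<delta> * (1 + \<bar>lam\<bar>) + integral {s..b+\<delta>} (\<lambda>x. \<bar>V x\<bar>)"
    if "b < s" "s \<le> t" "t \<le> b + \<delta>" for s t
  proof -
    have "integral {s..t} h \<le> integral {s..b+\<delta>} h"
      using that h_cont[of s t] h_cont[of s "b+\<delta>"]
      by (intro integral_subset_le integrable_continuous_real) (auto simp: h_def)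
    also have "\<dots> = (b + \<delta> - s) * (1 + \<bar>lam\<bar>) + integral {s..b+\<delta>} (\<lambda>x. \<bar>V x\<bar>)"
    proof -
      have "continuous_on {s..b+\<delta>} (\<lambda>x. \<bar>V x\<bar>)"
        using that by (intro continuous_at_imp_continuous_on continuous_intros) (auto intro!: cont)
      then show ?thesis
        using that unfolding h_def
        by (subst integral_add) (auto intro: integrable_continuous_real simp: add.assoc)
    qed
    also have "\<dots> \<le> \<delta> * (1 + \<bar>lam\<bar>) + integral {s..b+\<delta>} (\<lambda>x. \<bar>V x\<bar>)"
      using that by (intro add_right_mono mult_right_mono) auto
    finally show ?thesis .
  qed
  have "E t = 0" if t: "b < t" "t \<le> b + \<delta>" for t
  proof -
    define K where "K = \<delta> * (1 + \<bar>lam\<bar>) + L + 1"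
    have "\<forall>\<^sub>F s in at_right b. integral {s..b+\<delta>} (\<lambda>x. \<bar>V x\<bar>) < L + 1"
      using order_tendstoD(2)[OF L] by simp
    moreover have "\<forall>\<^sub>F s in at_right b. b < s \<and> s < t"
      using t by (auto simp: eventually_at_right_field intro!: exI[of _ t])
    ultimately have "\<forall>\<^sub>F s in at_right b. E t \<le> E s * exp K"
    proof eventually_elim
      case (elim s)
      then have "integral {s..t} h \<le> K" using h_integral[of s t] t by (simp add: K_def)
      then have "E s * exp (integral {s..t} h) \<le> E s * exp K"
        by (intro mult_left_mono) (auto simp: E_def)
      with E_growth[of s t] elim t show ?case by simp
    qed
    moreover have "((\<lambda>s. E s * exp K) \<longlongrightarrow> E b * exp K) (at_right b)"
      unfolding E_def using DERIV_isCont[OF w] DERIV_isCont[OF w']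
      by (intro tendsto_intros) (auto simp: isCont_def intro: tendsto_within_subset)
    ultimately have "E t \<le> E b * exp K"
      by (intro tendsto_le[OF _ _ tendsto_const]) auto
    then show "E t = 0" using \<open>w b = 0\<close> \<open>w' b = 0\<close> by (simp add: E_def sum_power2_le_zero_iff sum_power2_eq_zero_iff)
  qed
  then show ?thesis
    using \<open>\<delta> > 0\<close> unfolding eventually_at_right_field
    by (intro exI[of _ "b + \<delta>"]) (auto simp: E_def sum_power2_eq_zero_iff)
qed

lemma schroedinger_real_solution_unique:
  fixes w w' w'' V :: "real \<Rightarrow> real" and lam a :: real
  assumes "pc0 V"
    and w: "\<And>x. (w has_real_derivative w' x) (at x)"
    and w': "\<And>x. (w' has_real_derivative w'' x) (at x)"
    and eq: "\<And>x. w'' x = (V x - lam) * w x"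
    and "w a = 0" "w' a = 0"
  shows "w x = 0"
proof -
  define S where "S = {x. w x = 0} \<inter> {x. w' x = 0}"
  have "closed S"
  proof -
    have "continuous_on UNIV w" "continuous_on UNIV w'"
      using DERIV_isCont[OF w] DERIV_isCont[OF w'] by (auto intro!: continuous_at_imp_continuous_on)
    then show ?thesis
      unfolding S_def by (intro closed_Int closed_Collect_eq continuous_on_const)
  qed
  have near: "\<forall>\<^sub>F y in at b. y \<in> S" if "b \<in> S" for b
  proof -
    from that have "w b = 0" "w' b = 0" by (auto simp: S_def)
    have "\<forall>\<^sub>F y in at_right b. y \<in> S"
      using schroedinger_zero_propagates_right[OF \<open>pc0 V\<close> w w' eq \<open>w b = 0\<close> \<open>w' b = 0\<close>]
      by (simp add: S_def)
    moreover have "\<forall>\<^sub>F t in at_right (- b). w (- t) = 0 \<and> - w' (- t) = 0"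
    proof -
      have wr: "((\<lambda>t. w (- t)) has_real_derivative - w' (- x)) (at x)" for x
        using DERIV_mirror w by blast
      have wr': "((\<lambda>t. - w' (- t)) has_real_derivative w'' (- x)) (at x)" for x
        using DERIV_minus[OF iffD1[OF DERIV_mirror w']] by simp
      have eqr: "w'' (- x) = (V (- x) - lam) * w (- x)" for x
        by (rule eq)
      show ?thesis
        using schroedinger_zero_propagates_right[OF pc0_reflect[OF \<open>pc0 V\<close>] wr wr' eqr, where b="- b"]
          \<open>w b = 0\<close> \<open>w' b = 0\<close> by simp
    qed
    then have "\<forall>\<^sub>F y in at_left b. y \<in> S"
      unfolding at_left_minus eventually_filtermap by (simp add: S_def)
    ultimately show ?thesis by (simp add: eventually_at_split)
  qed
  have "open S"
  proof (rule Topological_Spaces.openI)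
    fix b assume "b \<in> S"
    then have "\<forall>\<^sub>F y in nhds b. y \<in> S" using near by (simp add: eventually_nhds_conv_at)
    then show "\<exists>T. open T \<and> b \<in> T \<and> T \<subseteq> S" unfolding eventually_nhds by blast
  qed
  moreover have "a \<in> S" using \<open>w a = 0\<close> \<open>w' a = 0\<close> by (simp add: S_def)
  ultimately have "S = UNIV" using \<open>closed S\<close> clopen[of S] by blast
  then show ?thesis by (auto simp: S_def)
qed

lemma wronskian_Im_cnj_constant:
  fixes \<psi> \<psi>' \<psi>'' :: "real \<Rightarrow> complex" and q :: "real \<Rightarrow> real"
  assumes \<psi>: "\<And>x. (\<psi> has_vector_derivative \<psi>' x) (at x)"
    and \<psi>': "\<And>x. (\<psi>' has_vector_derivative \<psi>'' x) (at x)"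
    and eq: "\<And>x. \<psi>'' x = of_real (q x) * \<psi> x"
  shows "Im (cnj (\<psi> x) * \<psi>' x) = Im (cnj (\<psi> y) * \<psi>' y)"
proof -
  have "((\<lambda>x. Im (cnj (\<psi> x) * \<psi>' x)) has_real_derivative 0) (at x)" for x
  proof -
    have "((\<lambda>x. Im (cnj (\<psi> x) * \<psi>' x)) has_real_derivative
        Im (cnj (\<psi> x) * \<psi>'' x + cnj (\<psi>' x) * \<psi>' x)) (at x)"
      by (intro has_field_derivative_Im has_vector_derivative_mult has_vector_derivative_cnj \<psi> \<psi>')
    moreover have "Im (cnj (\<psi> x) * \<psi>'' x + cnj (\<psi>' x) * \<psi>' x) = 0"
      by (simp add: eq)
    ultimately show ?thesis by simp
  qed
  then show ?thesis
    using DERIV_isconst_all[where f="\<lambda>x. Im (cnj (\<psi> x) * \<psi>' x)"] by blast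
qed

lemma schroedinger_solution_with_zero_real_multiple:
  fixes V :: "real \<Rightarrow> real" and \<psi> :: "real \<Rightarrow> complex"
  assumes "pc0 V" and "solves_schroedinger V lam \<psi>" and "\<psi> x0 = 0"
  obtains c f where "\<And>x. \<psi> x = c * of_real (f x)"
proof (cases "\<forall>x. \<psi> x = 0")
  case True
  then show ?thesis using that[of 0] by simp
next
  case False
  then obtain a where "\<psi> a \<noteq> 0" by blast
  obtain \<psi>' \<psi>'' where \<psi>: "\<And>x. (\<psi> has_vector_derivative \<psi>' x) (at x)"
    and \<psi>': "\<And>x. (\<psi>' has_vector_derivative \<psi>'' x) (at x)"
    and "\<And>x. - \<psi>'' x + of_real (V x) * \<psi> x = of_real lam * \<psi> x"
    using assms(2) unfolding solves_schroedinger_def by blast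
  then have eq: "\<psi>'' x = of_real (V x - lam) * \<psi> x" for x
    by (simp add: algebra_simps)
  (* Im g has vanishing Cauchy data at a: Im (g a) = 0 trivially, and the derivative
     Im (cnj (psi a) * psi' a) is the Wronskian, which vanishes since psi x0 = 0. *)
  define g where "g x = cnj (\<psi> a) * \<psi> x" for x
  have g: "((\<lambda>x. Im (g x)) has_real_derivative Im (cnj (\<psi> a) * \<psi>' x)) (at x)" for x
    unfolding g_def by (intro has_field_derivative_Im has_vector_derivative_mult_right \<psi>)
  have g': "((\<lambda>x. Im (cnj (\<psi> a) * \<psi>' x)) has_real_derivative Im (cnj (\<psi> a) * \<psi>'' x)) (at x)" for x
    by (intro has_field_derivative_Im has_vector_derivative_mult_right \<psi>')
  have g_eq: "Im (cnj (\<psi> a) * \<psi>'' x) = (V x - lam) * Im (g x)" for x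
    by (simp add: eq g_def algebra_simps)
  have "Im (g a) = 0" by (simp add: g_def)
  moreover have "Im (cnj (\<psi> a) * \<psi>' a) = 0"
    using wronskian_Im_cnj_constant[OF \<psi> \<psi>' eq, of a x0] \<open>\<psi> x0 = 0\<close> by simp
  ultimately have g_real: "Im (g x) = 0" for x
    using schroedinger_real_solution_unique[OF \<open>pc0 V\<close> g g' g_eq] by blast
  have "\<psi> x = \<psi> a / of_real ((cmod (\<psi> a))\<^sup>2) * of_real (Re (g x))" for x
  proof -
    have "of_real (Re (g x)) = cnj (\<psi> a) * \<psi> x"
      using g_real[of x] by (simp add: complex_eq_iff g_def)
    moreover have "\<psi> a * cnj (\<psi> a) = of_real ((cmod (\<psi> a))\<^sup>2)"
      by (rule complex_norm_square[symmetric])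
    ultimately show ?thesis using \<open>\<psi> a \<noteq> 0\<close> by (simp add: field_simps)
  qed
  then show ?thesis by (rule that)
qed

lemma bounded_quasiperiodic_multiplier_norm_eq_1:
  fixes \<psi> :: "real \<Rightarrow> 'a::real_normed_div_algebra" and \<mu> :: 'a
  assumes per: "\<And>x. \<psi> (x + \<gamma>) = \<mu> * \<psi> x" and "bounded (range \<psi>)" and "\<psi> a \<noteq> 0"
  shows "norm \<mu> = 1"
proof -
  obtain M where M: "\<And>x. norm (\<psi> x) \<le> M"
    using \<open>bounded (range \<psi>)\<close> unfolding bounded_iff by auto
  have shift: "\<psi> (x + real n * \<gamma>) = \<mu> ^ n * \<psi> x" for x n
  proof (induction n)
    case (Suc n)
    have "\<psi> (x + real (Suc n) * \<gamma>) = \<mu> * \<psi> (x + real n * \<gamma>)"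
      using per[of "x + real n * \<gamma>"] by (simp add: algebra_simps)
    with Suc show ?case by (simp add: mult.assoc)
  qed simp
  have "norm \<mu> \<le> 1"
  proof (rule ccontr)
    assume "\<not> norm \<mu> \<le> 1"
    then obtain n where "M / norm (\<psi> a) < norm \<mu> ^ n"
      using real_arch_pow by fastforce
    then have "M < norm (\<psi> (a + real n * \<gamma>))"
      using \<open>\<psi> a \<noteq> 0\<close> by (simp add: shift norm_mult norm_power pos_divide_less_eq)
    with M show False by (meson not_le)
  qed
  moreover have "1 \<le> norm \<mu>"
  proof (rule ccontr)
    assume "\<not> 1 \<le> norm \<mu>"
    then have "(\<lambda>n. norm \<mu> ^ n * M) \<longlonglongrightarrow> 0"
      by (intro tendsto_mult_left_zero LIMSEQ_realpow_zero) auto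
    moreover have "norm (\<psi> a) \<le> norm \<mu> ^ n * M" for n
      using shift[of "a - real n * \<gamma>" n] M[of "a - real n * \<gamma>"]
      by (simp add: norm_mult norm_power mult_left_mono)
    ultimately have "norm (\<psi> a) \<le> 0"
      by (intro LIMSEQ_le_const) auto
    with \<open>\<psi> a \<noteq> 0\<close> show False by simp
  qed
  ultimately show ?thesis by simp
qed

lemma real_multiple_quasiperiodic_real_multiplier:
  fixes \<psi> :: "real \<Rightarrow> complex" and f :: "real \<Rightarrow> real"
  assumes per: "\<And>x. \<psi> (x + \<gamma>) = \<mu> * \<psi> x" and \<psi>: "\<And>x. \<psi> x = c * of_real (f x)"
    and "\<psi> a \<noteq> 0"
  obtains r where "\<mu> = of_real r" and "\<And>x. f (x + \<gamma>) = r * f x"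
proof -
  have "c \<noteq> 0" "f a \<noteq> 0" using \<open>\<psi> a \<noteq> 0\<close> \<psi>[of a] by auto
  define r where "r = f (a + \<gamma>) / f a"
  have \<mu>: "\<mu> = of_real r"
    using per[of a] \<psi>[of a] \<psi>[of "a + \<gamma>"] \<open>c \<noteq> 0\<close> \<open>f a \<noteq> 0\<close> by (simp add: r_def field_simps)
  moreover have "f (x + \<gamma>) = r * f x" for x
  proof -
    have "c * of_real (f (x + \<gamma>)) = \<mu> * (c * of_real (f x))"
      using per[of x] by (simp only: \<psi>)
    also have "\<dots> = c * of_real (r * f x)"
      by (simp add: \<mu> mult.left_commute)
    finally show ?thesis using \<open>c \<noteq> 0\<close> by (metis mult_cancel_left of_real_eq_iff)
  qed
  ultimately show ?thesis by (rule that)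
qed

lemma exp_i_mult_square_eq_1_imp_int_multiple_pi:
  fixes k :: complex and \<gamma> :: real
  assumes "\<gamma> \<noteq> 0" and "exp (\<i> * k * of_real \<gamma>) ^ 2 = 1"
  shows "\<exists>n::int. k = of_real (of_int n * pi / \<gamma>)"
proof -
  have "exp (2 * (\<i> * k * of_real \<gamma>)) = 1"
    using assms(2) by (metis exp_of_nat_mult of_nat_numeral)
  then obtain n :: int where "Re (2 * (\<i> * k * of_real \<gamma>)) = 0"
      "Im (2 * (\<i> * k * of_real \<gamma>)) = of_int (2 * n) * pi"
    unfolding exp_eq_1 by blast
  with \<open>\<gamma> \<noteq> 0\<close> have "k = of_real (of_int n * pi / \<gamma>)"
    by (simp add: complex_eq_iff field_simps)
  then show ?thesis ..
qed

theorem theoremA12: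
  fixes \<gamma> lam :: real and V :: "real \<Rightarrow> real" and k :: complex
    and p \<psi> :: "real \<Rightarrow> complex"
  assumes "\<gamma> > 0"
    and "pcl_per \<gamma> 0 V"
    and "pcl_per \<gamma> 2 p"
    and "\<psi> = (\<lambda>x. exp (\<i> * k * of_real x) * p x)"
    and "\<psi> \<noteq> (\<lambda>_. 0)"
    and "solves_schroedinger V lam \<psi>"
    and "bounded (range \<psi>)"
    and "\<exists>x0. \<psi> x0 = 0"
  shows "(\<exists>n::int. k = of_real (of_int n * pi / \<gamma>)) \<and>
         (\<exists>(c::complex) (f::real \<Rightarrow> real).
            (\<forall>x. \<psi> x = c * of_real (f x)) \<and>
            ((\<forall>x. f (x + \<gamma>) = f x) \<or> (\<forall>x. f (x + \<gamma>) = - f x)))"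
proof -
  have "pc0 V" and p_per: "\<And>x. p (x + \<gamma>) = p x"
    using assms(2,3) unfolding pcl_per_def by simp_all
  obtain c f where \<psi>_cf: "\<And>x. \<psi> x = c * of_real (f x)"
    using schroedinger_solution_with_zero_real_multiple[OF \<open>pc0 V\<close> assms(6)] assms(8) by blast
  define \<mu> where "\<mu> = exp (\<i> * k * of_real \<gamma>)"
  have \<psi>_per: "\<psi> (x + \<gamma>) = \<mu> * \<psi> x" for x
    unfolding assms(4) \<mu>_def using p_per[of x] by (simp add: distrib_left exp_add)
  obtain a where "\<psi> a \<noteq> 0" using assms(5) by auto
  obtain r where \<mu>_r: "\<mu> = of_real r" and f_per: "\<And>x. f (x + \<gamma>) = r * f x"
    using real_multiple_quasiperiodic_real_multiplier[OF \<psi>_per \<psi>_cf \<open>\<psi> a \<noteq> 0\<close>] by blast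
  have "\<bar>r\<bar> = 1"
    using bounded_quasiperiodic_multiplier_norm_eq_1[OF \<psi>_per assms(7) \<open>\<psi> a \<noteq> 0\<close>] \<mu>_r by simp
  then have "\<mu> ^ 2 = 1"
    using \<mu>_r by (simp add: power2_eq_square abs_if split: if_splits)
  with assms(1) have "\<exists>n::int. k = of_real (of_int n * pi / \<gamma>)"
    unfolding \<mu>_def by (intro exp_i_mult_square_eq_1_imp_int_multiple_pi) auto
  moreover have "(\<forall>x. f (x + \<gamma>) = f x) \<or> (\<forall>x. f (x + \<gamma>) = - f x)"
    using \<open>\<bar>r\<bar> = 1\<close> f_per by (cases "r \<ge> 0") auto
  ultimately show ?thesis using \<psi>_cf by blast
qed

end
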